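(* Let $G$ be a finite group. Then $G$ is nested if and only if $K(G/N)>1$ for every proper normal subgroup $N$ of $G$.
   Context: All groups are finite. For $\chi\in\mathrm{Irr}(G)$, the center of $\chi$ is $Z(\chi)=\{g\in G : |\chi(g)|=\chi(1)\}$; equivalently $Z(\chi)/\ker(\chi)=Z(G/\ker(\chi))$. A group $G$ is nested if for all $\chi,\psi\in\mathrm{Irr}(G)$ either $Z(\chi)\le Z(\psi)$ or $Z(\psi)\le Z(\chi)$. For a nonabelian group $H$, let $\mathcal{X}_H=\{\chi\in\mathrm{Irr}(H) : Z(\chi)>Z(H)\}$ (strict containment) and define $K(H)=\bigcap_{\chi\in\mathcal{X}_H}\ker(\chi)$; if $H$ is abelian, set $K(H)=H$. Here $K(G/N)$ is this subgroup computed in the group $H=G/N$. *)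

theory Defs
  imports "HOL-Algebra.Algebra" "Jordan_Normal_Form.Matrix"
begin

definition mat_tr :: "complex mat \<Rightarrow> complex" where
  "mat_tr A = (\<Sum>i<dim_row A. A $$ (i, i))"

definition csubspace_vec :: "nat \<Rightarrow> complex vec set \<Rightarrow> bool" where
  "csubspace_vec n W \<longleftrightarrow> W \<subseteq> carrier_vec n \<and> 0\<^sub>v n \<in> W \<and>
     (\<forall>v\<in>W. \<forall>w\<in>W. v + w \<in> W) \<and> (\<forall>c. \<forall>v\<in>W. c \<cdot>\<^sub>v v \<in> W)"

definition crep :: "('a, 'b) monoid_scheme \<Rightarrow> nat \<Rightarrow> ('a \<Rightarrow> complex mat) \<Rightarrow> bool" where
  "crep G n \<rho> \<longleftrightarrow> 0 < n \<and> (\<forall>g\<in>carrier G. \<rho> g \<in> carrier_mat n n) \<and>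
     \<rho> \<one>\<^bsub>G\<^esub> = 1\<^sub>m n \<and>
     (\<forall>g\<in>carrier G. \<forall>h\<in>carrier G. \<rho> (g \<otimes>\<^bsub>G\<^esub> h) = \<rho> g * \<rho> h)"

definition irr_crep :: "('a, 'b) monoid_scheme \<Rightarrow> nat \<Rightarrow> ('a \<Rightarrow> complex mat) \<Rightarrow> bool" where
  "irr_crep G n \<rho> \<longleftrightarrow> crep G n \<rho> \<and>
     (\<forall>W. csubspace_vec n W \<and> (\<forall>g\<in>carrier G. \<forall>w\<in>W. \<rho> g *\<^sub>v w \<in> W)
          \<longrightarrow> W = {0\<^sub>v n} \<or> W = carrier_vec n)"

definition Irr :: "('a, 'b) monoid_scheme \<Rightarrow> ('a \<Rightarrow> complex) set" where
  "Irr G = {\<chi>. \<exists>n \<rho>. irr_crep G n \<rho> \<and> \<chi> = (\<lambda>g\<in>carrier G. mat_tr (\<rho> g))}"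

definition char_center :: "('a, 'b) monoid_scheme \<Rightarrow> ('a \<Rightarrow> complex) \<Rightarrow> 'a set" where
  "char_center G \<chi> = {g\<in>carrier G. complex_of_real (cmod (\<chi> g)) = \<chi> \<one>\<^bsub>G\<^esub>}"

definition char_ker :: "('a, 'b) monoid_scheme \<Rightarrow> ('a \<Rightarrow> complex) \<Rightarrow> 'a set" where
  "char_ker G \<chi> = {g\<in>carrier G. \<chi> g = \<chi> \<one>\<^bsub>G\<^esub>}"

definition group_center :: "('a, 'b) monoid_scheme \<Rightarrow> 'a set" where
  "group_center G = {z\<in>carrier G. \<forall>g\<in>carrier G. z \<otimes>\<^bsub>G\<^esub> g = g \<otimes>\<^bsub>G\<^esub> z}"

definition nested :: "('a, 'b) monoid_scheme \<Rightarrow> bool" where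
  "nested G \<longleftrightarrow> (\<forall>\<chi>\<in>Irr G. \<forall>\<psi>\<in>Irr G.
      char_center G \<chi> \<subseteq> char_center G \<psi> \<or> char_center G \<psi> \<subseteq> char_center G \<chi>)"

definition Kgrp :: "('a, 'b) monoid_scheme \<Rightarrow> 'a set" where
  "Kgrp H = (if (\<forall>x\<in>carrier H. \<forall>y\<in>carrier H. x \<otimes>\<^bsub>H\<^esub> y = y \<otimes>\<^bsub>H\<^esub> x) then carrier H
     else carrier H \<inter> \<Inter>{char_ker H \<chi> | \<chi>. \<chi> \<in> Irr H \<and> group_center H \<subset> char_center H \<chi>})"

end

theory Submission
  imports Defs "Jordan_Normal_Form.Jordan_Normal_Form_Existence"
begin

text \<open>
  Let \<open>\<chi>\<close> be afforded by a representation \<open>\<rho>\<close> of the finite group \<open>G\<close>. Every \<open>\<rho>(g)\<close> has finite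
  order, so it is diagonalisable with roots of unity as eigenvalues; hence \<open>|\<chi>(g)| = \<chi>(1)\<close>
  exactly when \<open>\<rho>(g)\<close> is scalar, and \<open>\<chi>(g) = \<chi>(1)\<close> exactly when \<open>\<rho>(g) = 1\<close>. Thus \<open>Z(\<chi>)/ker \<chi>\<close>
  is central, Schur's lemma puts \<open>Z(G)\<close> inside every \<open>Z(\<chi>)\<close>, and the irreducible characters of
  \<open>G/N\<close> are the irreducible characters of \<open>G\<close> whose kernel contains \<open>N\<close>, with matching centres.

  If \<open>G\<close> is nested, so is every nontrivial quotient \<open>H\<close>. When some \<open>Z(\<psi>)\<close> properly contains
  \<open>Z(H)\<close>, these centres form a chain; the smallest one contains some \<open>g \<notin> Z(H)\<close>, and the
  commutator of \<open>g\<close> with an element not commuting with it is a nontrivial element of every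
  such \<open>ker \<psi>\<close>, hence of \<open>K(H)\<close>.

  Conversely, if \<open>Z(\<chi>)\<close> and \<open>Z(\<psi>)\<close> were incomparable, \<open>N = ker \<chi> \<inter> ker \<psi>\<close> would be a proper
  normal subgroup, and \<open>\<chi>, \<psi>\<close> would be characters of \<open>G/N\<close> with trivially intersecting kernels.
  As \<open>K(G/N) > 1\<close>, not both centres can properly contain \<open>Z(G/N)\<close>; so one of them equals
  \<open>Z(G/N)\<close> and lies in the other, an inclusion that lifts back to \<open>G\<close>.
\<close>

section \<open>Complex matrices\<close>

lemma mat_tr_mult_comm:
  assumes A: "A \<in> carrier_mat n m" and B: "B \<in> carrier_mat m n"
  shows "mat_tr (A * B) = mat_tr (B * A)"
proof -
  have "mat_tr (A * B) = (\<Sum>i<n. \<Sum>k<m. A $$ (i,k) * B $$ (k,i))"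
    using A B unfolding mat_tr_def
    by (auto simp: scalar_prod_def lessThan_atLeast0 intro!: sum.cong)
  also have "\<dots> = (\<Sum>k<m. \<Sum>i<n. B $$ (k,i) * A $$ (i,k))"
    by (subst sum.swap) (simp add: mult.commute)
  also have "\<dots> = mat_tr (B * A)"
    using A B unfolding mat_tr_def
    by (auto simp: scalar_prod_def lessThan_atLeast0 intro!: sum.cong)
  finally show ?thesis .
qed

lemma mat_tr_smult_one [simp]: "mat_tr (c \<cdot>\<^sub>m 1\<^sub>m n) = c * of_nat n"
  unfolding mat_tr_def by (simp add: mult.commute)

lemma mat_tr_one [simp]: "mat_tr (1\<^sub>m n) = of_nat n"
  unfolding mat_tr_def by simp

lemma mat_tr_similar:
  assumes "similar_mat_wit A B P Q"
  shows "mat_tr A = mat_tr B"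
proof -
  define n where "n = dim_row A"
  note wit = similar_mat_witD[OF n_def assms]
  have PB: "P * B \<in> carrier_mat n n"
    using wit(5,6) by simp
  have "mat_tr A = mat_tr (P * B * Q)"
    using wit(3) by simp
  also have "\<dots> = mat_tr (Q * (P * B))"
    using PB wit(7) by (rule mat_tr_mult_comm)
  also have "Q * (P * B) = Q * P * B"
    using wit(7,6,5) by (rule assoc_mult_mat[symmetric])
  also have "\<dots> = B"
    using wit(2,5) by simp
  finally show ?thesis .
qed

lemma smult_one_mat_pow: "(c \<cdot>\<^sub>m 1\<^sub>m n :: complex mat) ^\<^sub>m k = c ^ k \<cdot>\<^sub>m 1\<^sub>m n"
proof (induction k)
  case (Suc k)
  have "(c \<cdot>\<^sub>m 1\<^sub>m n :: complex mat) ^\<^sub>m Suc k = c ^ k \<cdot>\<^sub>m (1\<^sub>m n * (c \<cdot>\<^sub>m 1\<^sub>m n))"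
    using Suc by (simp add: mult_smult_assoc_mat[of _ n n _ n])
  also have "\<dots> = c ^ Suc k \<cdot>\<^sub>m 1\<^sub>m n"
    by (intro eq_matI) auto
  finally show ?case .
qed (intro eq_matI, auto)

lemma smult_one_mat_comm:
  assumes "B \<in> carrier_mat n n"
  shows "(c \<cdot>\<^sub>m 1\<^sub>m n :: complex mat) * B = B * (c \<cdot>\<^sub>m 1\<^sub>m n)"
proof -
  have "(c \<cdot>\<^sub>m 1\<^sub>m n) * B = c \<cdot>\<^sub>m B"
    using mult_smult_assoc_mat[OF one_carrier_mat assms, of c] assms by simp
  also have "\<dots> = B * (c \<cdot>\<^sub>m 1\<^sub>m n)"
    using mult_smult_distrib[OF assms one_carrier_mat, of c] assms by simp
  finally show ?thesis .
qed

lemma jordan_block_dim [simp]: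
  "dim_row (jordan_block n a) = n" "dim_col (jordan_block n a) = n"
  by (simp_all add: jordan_block_def)

lemma jordan_block_pow_eq_one:
  fixes a :: "'a :: field_char_0"
  assumes n: "n > 0" and m: "m > 0" and eq: "jordan_block n a ^\<^sub>m m = 1\<^sub>m n"
  shows "n = 1 \<and> a ^ m = 1"
proof -
  have am: "a ^ m = 1"
    using arg_cong[OF eq, of "\<lambda>M. M $$ (0,0)"] n by (simp add: jordan_block_pow)
  have "n = 1"
  proof (rule ccontr)
    assume "n \<noteq> 1"
    with n have "of_nat m * a ^ (m - 1) = 0"
      using arg_cong[OF eq, of "\<lambda>M. M $$ (0,1)"] by (simp add: jordan_block_pow)
    with m am show False
      by (auto simp: power_0_left)
  qed
  with am show ?thesis by simp
qed

lemma jordan_matrix_pow_eq_one: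
  fixes n_as :: "(nat \<times> 'a :: field_char_0) list"
  assumes "0 \<notin> fst ` set n_as" and m: "m > 0"
    and "jordan_matrix n_as ^\<^sub>m m = 1\<^sub>m (sum_list (map fst n_as))"
  shows "\<forall>(n,a)\<in>set n_as. n = 1 \<and> a ^ m = 1"
  using assms(1,3)
proof (induction n_as)
  case (Cons na n_as)
  obtain n a where na: "na = (n,a)" by force
  let ?s = "sum_list (map fst n_as)"
  let ?X = "jordan_block n a ^\<^sub>m m"
  let ?D = "jordan_matrix n_as ^\<^sub>m m"
  have E: "four_block_mat ?X (0\<^sub>m n ?s) (0\<^sub>m ?s n) ?D = 1\<^sub>m (n + ?s)"
    using Cons.prems(2) unfolding na jordan_matrix_Cons
    by (simp add: pow_four_block_mat)
  have "?X = 1\<^sub>m n"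
  proof (rule eq_matI)
    fix i j assume "i < dim_row (1\<^sub>m n :: 'a mat)" "j < dim_col (1\<^sub>m n :: 'a mat)"
    then show "?X $$ (i,j) = 1\<^sub>m n $$ (i,j)"
      using arg_cong[OF E, of "\<lambda>M. M $$ (i,j)"] m by auto
  qed auto
  moreover have "?D = 1\<^sub>m ?s"
  proof (rule eq_matI)
    fix i j assume "i < dim_row (1\<^sub>m ?s :: 'a mat)" "j < dim_col (1\<^sub>m ?s :: 'a mat)"
    then show "?D $$ (i,j) = 1\<^sub>m ?s $$ (i,j)"
      using arg_cong[OF E, of "\<lambda>M. M $$ (n + i, n + j)"] m by auto
  qed auto
  ultimately show ?case
    using Cons jordan_block_pow_eq_one[of n m a] m na by auto
qed simp

lemma jordan_matrix_all_blocks_one: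
  fixes n_as :: "(nat \<times> 'a :: {zero,one}) list"
  assumes "\<forall>(n,a)\<in>set n_as. n = 1"
  shows "jordan_matrix n_as =
    mat (length n_as) (length n_as) (\<lambda>(i,j). if i = j then snd (n_as ! i) else 0)"
  using assms
proof (induction n_as)
  case Nil
  then show ?case by (auto simp: jordan_matrix_def)
next
  case (Cons na n_as)
  obtain a where na: "na = (1,a)"
    using Cons.prems by (cases na) auto
  have "sum_list (map fst n_as) = length n_as"
    using Cons.prems by (induction n_as) auto
  then show ?case
    unfolding na jordan_matrix_Cons using Cons
    by (intro eq_matI) (auto simp: na nth_Cons' jordan_block_def)
qed

lemma unimodular_sum_norm_eq_imp_const:
  fixes a :: "nat \<Rightarrow> complex"
  assumes k: "k > 0" and unit: "\<And>i. i < k \<Longrightarrow> cmod (a i) = 1"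
    and sum: "cmod (\<Sum>i<k. a i) = real k"
  shows "\<exists>c. \<forall>i<k. a i = c"
proof -
  define S where "S = (\<Sum>i<k. a i)"
  define u where "u = S / of_nat k"
  have u: "cmod u = 1"
    using sum k by (simp add: u_def S_def norm_divide)
  have le: "Re (cnj u * a i) \<le> 1" if "i < k" for i
    using complex_Re_le_cmod[of "cnj u * a i"] unit[OF that] u by (simp add: norm_mult)
  \<comment> \<open>\<open>cnj u\<close> rotates the sum onto the positive real axis, so every summand \<open>cnj u * a i\<close>
      of modulus one has real part exactly one.\<close>
  have "(\<Sum>i<k. cnj u * a i) = cnj u * S"
    by (simp add: S_def sum_distrib_left)
  also have "\<dots> = cnj S * S / of_nat k"
    by (simp add: u_def)
  also have "cnj S * S = of_real ((cmod S)\<^sup>2)"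
    by (simp only: complex_norm_square mult.commute)
  also have "\<dots> / of_nat k = of_nat k"
    using sum k by (simp add: S_def power2_eq_square)
  finally have "Re (\<Sum>i<k. cnj u * a i) = real k"
    by simp
  then have "(\<Sum>i<k. 1 - Re (cnj u * a i)) = 0"
    by (simp only: Re_sum) (simp add: sum_subtractf)
  then have re: "Re (cnj u * a i) = 1" if "i < k" for i
    using le that by (subst (asm) sum_nonneg_eq_0_iff) auto
  have "a i = u" if "i < k" for i
  proof -
    have "cmod (cnj u * a i) = 1"
      using unit[OF that] u by (simp add: norm_mult)
    then have "Im (cnj u * a i) = 0"
      using re[OF that] cmod_power2[of "cnj u * a i"] by simp
    then have "cnj u * a i = 1"
      using re[OF that] by (simp add: complex_eq_iff)
    then have "u * cnj u * a i = u"
      by (simp add: mult.assoc)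
    then show ?thesis
      using u by (simp add: complex_norm_square[symmetric])
  qed
  then show ?thesis by blast
qed

lemma jordan_nf_pow_eq_one:
  fixes A :: "'a :: field_char_0 mat"
  assumes A: "A \<in> carrier_mat n n" and jnf: "jordan_nf A n_as"
    and m: "m > 0" and Am: "A ^\<^sub>m m = 1\<^sub>m n"
  shows "\<forall>(k,a)\<in>set n_as. k = 1 \<and> a ^ m = 1"
proof -
  obtain P Q where wit: "similar_mat_wit A (jordan_matrix n_as) P Q"
    and pos: "0 \<notin> fst ` set n_as"
    using jnf unfolding jordan_nf_def similar_mat_def by blast
  note W = similar_mat_witD2[OF A wit]
  have size: "sum_list (map fst n_as) = n"
    using W(5) by (metis carrier_matD(1) jordan_matrix_dim(1))
  have "jordan_matrix n_as ^\<^sub>m m = Q * A ^\<^sub>m m * P"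
    using similar_mat_wit_pow_id[OF similar_mat_wit_sym[OF wit]] .
  also have "\<dots> = 1\<^sub>m (sum_list (map fst n_as))"
    using Am W(2,7) size by simp
  finally show ?thesis
    by (rule jordan_matrix_pow_eq_one[OF pos m])
qed

lemma similar_mat_wit_smult_one:
  fixes c :: "'a :: comm_ring_1"
  assumes "similar_mat_wit A (c \<cdot>\<^sub>m 1\<^sub>m n) P Q"
  shows "A = c \<cdot>\<^sub>m 1\<^sub>m n"
proof -
  define k where "k = dim_row A"
  note W = similar_mat_witD[OF k_def assms]
  have n: "n = k"
    using W(5) by auto
  have "A = P * (c \<cdot>\<^sub>m 1\<^sub>m n) * Q"
    by (rule W(3))
  also have "P * (c \<cdot>\<^sub>m 1\<^sub>m n) = c \<cdot>\<^sub>m P"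
    unfolding n using mult_smult_distrib[OF W(6) one_carrier_mat, of c] W(6) by simp
  also have "c \<cdot>\<^sub>m P * Q = c \<cdot>\<^sub>m (P * Q)"
    by (rule mult_smult_assoc_mat[OF W(6,7)])
  finally show ?thesis
    using W(1) n by simp
qed

lemma finite_order_mat_scalar_if_norm_trace:
  fixes A :: "complex mat"
  assumes A: "A \<in> carrier_mat n n" and m: "m > 0" and Am: "A ^\<^sub>m m = 1\<^sub>m n"
    and tr: "cmod (mat_tr A) = real n"
  shows "\<exists>c. A = c \<cdot>\<^sub>m 1\<^sub>m n"
proof (cases "n = 0")
  case True
  then show ?thesis
    using A by (intro exI[of _ 0] eq_matI) auto
next
  case False
  obtain n_as where jnf: "jordan_nf A n_as"
    using jordan_nf_exists[OF A] char_poly_factorized[OF A] by blast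
  let ?J = "jordan_matrix n_as"
  obtain P Q where wit: "similar_mat_wit A ?J P Q"
    using jnf unfolding jordan_nf_def similar_mat_def by blast
  have "\<forall>(k,a)\<in>set n_as. k = 1 \<and> a ^ m = 1"
    by (rule jordan_nf_pow_eq_one[OF A jnf m Am])
  then have blocks: "\<forall>(k,a)\<in>set n_as. k = 1" and roots: "\<forall>(k,a)\<in>set n_as. a ^ m = 1"
    by auto
  have "length n_as = sum_list (map fst n_as)"
    using blocks by (induction n_as) auto
  also have "\<dots> = n"
    using similar_mat_witD2(5)[OF A wit] by (metis carrier_matD(1) jordan_matrix_dim(1))
  finally have len: "length n_as = n" .
  define d where "d i = snd (n_as ! i)" for i
  have J: "?J = mat n n (\<lambda>(i,j). if i = j then d i else 0)"
    unfolding d_def using jordan_matrix_all_blocks_one[OF blocks] len by simp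
  have unit: "cmod (d i) = 1" if "i < n" for i
  proof -
    have "n_as ! i \<in> set n_as"
      using that len by simp
    then have "d i ^ m = 1"
      using roots unfolding d_def by (auto simp: case_prod_beta)
    then show ?thesis
      using power_eq_1_iff m by blast
  qed
  have "mat_tr A = mat_tr ?J"
    by (rule mat_tr_similar[OF wit])
  also have "\<dots> = (\<Sum>i<n. d i)"
    unfolding J mat_tr_def by simp
  finally obtain c where c: "\<forall>i<n. d i = c"
    using unimodular_sum_norm_eq_imp_const[of n d] unit tr False by auto
  have "?J = c \<cdot>\<^sub>m 1\<^sub>m n"
    unfolding J by (intro eq_matI) (auto simp: c)
  then show ?thesis
    using similar_mat_wit_smult_one wit by metis
qed

lemma complex_mat_eigenvector_exists:
  fixes A :: "complex mat"
  assumes A: "A \<in> carrier_mat n n" and n: "n > 0"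
  obtains c v where "v \<in> carrier_vec n" and "v \<noteq> 0\<^sub>v n" and "A *\<^sub>v v = c \<cdot>\<^sub>v v"
proof -
  obtain as where cp: "char_poly A = (\<Prod>a\<leftarrow>as. [:- a, 1:])" and len: "length as = n"
    using char_poly_factorized[OF A] by blast
  then obtain c rest where "as = c # rest"
    using n by (cases as) auto
  then have "eigenvalue A c"
    using cp eigenvalue_root_char_poly[OF A] by simp
  then show ?thesis
    using A that unfolding eigenvalue_def eigenvector_def by auto
qed

lemma csubspace_vec_eigenspace:
  assumes A: "A \<in> carrier_mat n n"
  shows "csubspace_vec n {w \<in> carrier_vec n. A *\<^sub>v w = c \<cdot>\<^sub>v w}"
  unfolding csubspace_vec_def
  using A by (auto simp: mult_add_distrib_mat_vec[OF A] smult_add_distrib_vec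
      mult_mat_vec[OF A] smult_smult_assoc mult.commute)

lemma eq_smult_one_mat_if_eigenspace_full:
  fixes A :: "'a :: comm_ring_1 mat"
  assumes A: "A \<in> carrier_mat n n" and eigen: "\<And>w. w \<in> carrier_vec n \<Longrightarrow> A *\<^sub>v w = c \<cdot>\<^sub>v w"
  shows "A = c \<cdot>\<^sub>m 1\<^sub>m n"
proof (rule eq_matI)
  fix i j assume "i < dim_row (c \<cdot>\<^sub>m 1\<^sub>m n)" and "j < dim_col (c \<cdot>\<^sub>m 1\<^sub>m n)"
  then have ij: "i < n" "j < n"
    by auto
  have "(A *\<^sub>v unit_vec n j) $ i = (c \<cdot>\<^sub>v unit_vec n j) $ i"
    using eigen[of "unit_vec n j"] by simp
  then show "A $$ (i,j) = (c \<cdot>\<^sub>m 1\<^sub>m n) $$ (i,j)"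
    using A ij by (simp add: row_def)
qed (use A in auto)

section \<open>Representations and their characters\<close>

lemma crep_carrier: "crep G n \<rho> \<Longrightarrow> g \<in> carrier G \<Longrightarrow> \<rho> g \<in> carrier_mat n n"
  unfolding crep_def by auto

lemma crep_one: "crep G n \<rho> \<Longrightarrow> \<rho> \<one>\<^bsub>G\<^esub> = 1\<^sub>m n"
  unfolding crep_def by auto

lemma crep_mult:
  "crep G n \<rho> \<Longrightarrow> g \<in> carrier G \<Longrightarrow> h \<in> carrier G \<Longrightarrow> \<rho> (g \<otimes>\<^bsub>G\<^esub> h) = \<rho> g * \<rho> h"
  unfolding crep_def by auto

lemma crep_pos: "crep G n \<rho> \<Longrightarrow> n > 0"
  unfolding crep_def by auto

lemma irr_crep_crep: "irr_crep G n \<rho> \<Longrightarrow> crep G n \<rho>"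
  unfolding irr_crep_def by blast

lemma crep_inv:
  assumes "group G" and "crep G n \<rho>" and "a \<in> carrier G"
  shows "\<rho> a * \<rho> (inv\<^bsub>G\<^esub> a) = 1\<^sub>m n"
  using crep_mult[OF assms(2,3) group.inv_closed[OF assms(1,3)]] crep_one[OF assms(2)]
    group.r_inv[OF assms(1,3)] by simp

lemma crep_pow:
  assumes "group G" and cr: "crep G n \<rho>" and x: "x \<in> carrier G"
  shows "\<rho> (x [^]\<^bsub>G\<^esub> (k::nat)) = \<rho> x ^\<^sub>m k"
proof (induction k)
  case 0
  then show ?case using crep_one[OF cr] crep_carrier[OF cr x] by simp
next
  case (Suc k)
  then show ?case
    using crep_mult[OF cr _ x] x assms(1) by (simp add: group.is_monoid monoid.nat_pow_Suc monoid.nat_pow_closed)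
qed

lemma crep_pow_ord:
  assumes "group G" and "crep G n \<rho>" and "x \<in> carrier G"
  shows "\<rho> x ^\<^sub>m group.ord G x = 1\<^sub>m n"
  using crep_pow[OF assms] crep_one[OF assms(2)] group.pow_ord_eq_1[OF assms(1,3)] by metis

lemma crep_kernel_normal:
  assumes G: "group G" and cr: "crep G n \<rho>"
  shows "{g \<in> carrier G. \<rho> g = 1\<^sub>m n} \<lhd> G"
proof -
  let ?N = "{g \<in> carrier G. \<rho> g = 1\<^sub>m n}"
  have inv: "\<rho> (inv\<^bsub>G\<^esub> a) = 1\<^sub>m n" if "a \<in> ?N" for a
    using crep_inv[OF G cr, of a] crep_carrier[OF cr group.inv_closed[OF G], of a] that by simp
  have one: "\<one>\<^bsub>G\<^esub> \<in> ?N"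
    using crep_one[OF cr] by (simp add: G group.is_monoid monoid.one_closed)
  have mult: "a \<otimes>\<^bsub>G\<^esub> b \<in> ?N" if "a \<in> ?N" "b \<in> ?N" for a b
    using that crep_mult[OF cr] by (simp add: G group.is_monoid monoid.m_closed)
  have "subgroup ?N G"
    using one mult inv by (intro group.subgroupI[OF G]) (auto simp: G group.inv_closed)
  moreover have "x \<otimes>\<^bsub>G\<^esub> h \<otimes>\<^bsub>G\<^esub> inv\<^bsub>G\<^esub> x \<in> ?N" if "x \<in> carrier G" "h \<in> ?N" for x h
    using that crep_mult[OF cr] crep_inv[OF G cr that(1)] crep_carrier[OF cr that(1)]
    by (simp add: G group.is_monoid monoid.m_closed group.inv_closed)
  ultimately show ?thesis
    using group.normal_inv_iff[OF G] by blast
qed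

lemma schur_lemma:
  assumes irr: "irr_crep G n \<rho>" and A: "A \<in> carrier_mat n n"
    and comm: "\<And>g. g \<in> carrier G \<Longrightarrow> A * \<rho> g = \<rho> g * A"
  shows "\<exists>c. A = c \<cdot>\<^sub>m 1\<^sub>m n"
proof -
  have cr: "crep G n \<rho>"
    using irr by (rule irr_crep_crep)
  obtain c v where v: "v \<in> carrier_vec n" "v \<noteq> 0\<^sub>v n" "A *\<^sub>v v = c \<cdot>\<^sub>v v"
    using complex_mat_eigenvector_exists[OF A crep_pos[OF cr]] .
  define W where "W = {w \<in> carrier_vec n. A *\<^sub>v w = c \<cdot>\<^sub>v w}"
  have "\<rho> g *\<^sub>v w \<in> W" if g: "g \<in> carrier G" and w: "w \<in> W" for g w
  proof -
    have Rg: "\<rho> g \<in> carrier_mat n n" and wc: "w \<in> carrier_vec n"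
      using crep_carrier[OF cr g] w by (auto simp: W_def)
    have "A *\<^sub>v (\<rho> g *\<^sub>v w) = (A * \<rho> g) *\<^sub>v w"
      using A Rg wc by simp
    also have "A * \<rho> g = \<rho> g * A"
      by (rule comm[OF g])
    also have "(\<rho> g * A) *\<^sub>v w = \<rho> g *\<^sub>v (c \<cdot>\<^sub>v w)"
      using A Rg wc w by (simp add: W_def)
    also have "\<dots> = c \<cdot>\<^sub>v (\<rho> g *\<^sub>v w)"
      by (rule mult_mat_vec[OF Rg wc])
    finally show ?thesis
      using Rg wc by (simp add: W_def)
  qed
  then have "W = carrier_vec n"
    using irr v csubspace_vec_eigenspace[OF A] unfolding irr_crep_def W_def by blast
  then show ?thesis
    using eq_smult_one_mat_if_eigenspace_full[OF A] unfolding W_def by blast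
qed

abbreviation character :: "('a, 'b) monoid_scheme \<Rightarrow> ('a \<Rightarrow> complex mat) \<Rightarrow> 'a \<Rightarrow> complex" where
  "character G \<rho> \<equiv> \<lambda>g\<in>carrier G. mat_tr (\<rho> g)"

lemma IrrI: "irr_crep G n \<rho> \<Longrightarrow> character G \<rho> \<in> Irr G"
  unfolding Irr_def by blast

lemma IrrE:
  assumes "\<chi> \<in> Irr G"
  obtains n \<rho> where "irr_crep G n \<rho>" and "\<chi> = character G \<rho>"
  using assms unfolding Irr_def by blast

lemma character_one: "group G \<Longrightarrow> crep G n \<rho> \<Longrightarrow> character G \<rho> \<one>\<^bsub>G\<^esub> = of_nat n"
  by (simp add: crep_one group.is_monoid monoid.one_closed)

lemma char_center_character:
  assumes G: "group G" and fin: "finite (carrier G)" and cr: "crep G n \<rho>"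
  shows "char_center G (character G \<rho>) = {g \<in> carrier G. \<exists>c. \<rho> g = c \<cdot>\<^sub>m 1\<^sub>m n}"
proof -
  have "cmod (mat_tr (\<rho> g)) = real n \<longleftrightarrow> (\<exists>c. \<rho> g = c \<cdot>\<^sub>m 1\<^sub>m n)" if g: "g \<in> carrier G" for g
  proof
    have "group.ord G g > 0"
      using group.ord_ge_1[OF G fin g] by simp
    then show "cmod (mat_tr (\<rho> g)) = real n \<Longrightarrow> \<exists>c. \<rho> g = c \<cdot>\<^sub>m 1\<^sub>m n"
      using finite_order_mat_scalar_if_norm_trace[OF crep_carrier[OF cr g] _ crep_pow_ord[OF G cr g]]
      by blast
  next
    assume "\<exists>c. \<rho> g = c \<cdot>\<^sub>m 1\<^sub>m n"
    then obtain c where c: "\<rho> g = c \<cdot>\<^sub>m 1\<^sub>m n" ..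
    have "c ^ group.ord G g \<cdot>\<^sub>m 1\<^sub>m n = (1\<^sub>m n :: complex mat)"
      using crep_pow_ord[OF G cr g] by (simp add: c smult_one_mat_pow)
    then have "(c ^ group.ord G g \<cdot>\<^sub>m 1\<^sub>m n :: complex mat) $$ (0,0) = 1\<^sub>m n $$ (0,0)"
      by simp
    then have "c ^ group.ord G g = 1"
      using crep_pos[OF cr] by simp
    then have "cmod c = 1"
      using power_eq_1_iff group.ord_ge_1[OF G fin g] by fastforce
    then show "cmod (mat_tr (\<rho> g)) = real n"
      by (simp add: c norm_mult)
  qed
  moreover have "complex_of_real r = of_nat n \<longleftrightarrow> r = real n" for r
    by (metis of_real_eq_iff of_real_of_nat_eq)
  ultimately show ?thesis
    unfolding char_center_def character_one[OF G cr] by auto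
qed

lemma char_ker_character:
  assumes G: "group G" and fin: "finite (carrier G)" and cr: "crep G n \<rho>"
  shows "char_ker G (character G \<rho>) = {g \<in> carrier G. \<rho> g = 1\<^sub>m n}"
proof -
  have "mat_tr (\<rho> g) = of_nat n \<longleftrightarrow> \<rho> g = 1\<^sub>m n" if g: "g \<in> carrier G" for g
  proof
    assume tr: "mat_tr (\<rho> g) = of_nat n"
    have "g \<in> char_center G (character G \<rho>)"
      unfolding char_center_def character_one[OF G cr] using g tr by simp
    then obtain c where c: "\<rho> g = c \<cdot>\<^sub>m 1\<^sub>m n"
      unfolding char_center_character[OF G fin cr] by blast
    then have "c = 1"
      using tr crep_pos[OF cr] by simp
    then show "\<rho> g = 1\<^sub>m n"
      using c by (intro eq_matI) auto
  qed simp
  then show ?thesis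
    unfolding char_ker_def character_one[OF G cr] by auto
qed

lemma char_ker_normal:
  assumes "group G" and "finite (carrier G)" and "\<chi> \<in> Irr G"
  shows "char_ker G \<chi> \<lhd> G"
proof -
  obtain n \<rho> where "irr_crep G n \<rho>" and \<chi>: "\<chi> = character G \<rho>"
    using assms(3) by (rule IrrE)
  then have cr: "crep G n \<rho>"
    by (simp add: irr_crep_crep)
  show ?thesis
    unfolding \<chi> char_ker_character[OF assms(1,2) cr] using assms(1) cr by (rule crep_kernel_normal)
qed

lemma char_ker_subset_char_center:
  assumes "group G" and "finite (carrier G)" and "\<chi> \<in> Irr G"
  shows "char_ker G \<chi> \<subseteq> char_center G \<chi>"
proof -
  obtain n \<rho> where "irr_crep G n \<rho>" and \<chi>: "\<chi> = character G \<rho>"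
    using assms(3) by (rule IrrE)
  then have cr: "crep G n \<rho>"
    by (simp add: irr_crep_crep)
  have "1\<^sub>m n = (1 \<cdot>\<^sub>m 1\<^sub>m n :: complex mat)"
    by (intro eq_matI) auto
  then show ?thesis
    unfolding \<chi> char_ker_character[OF assms(1,2) cr] char_center_character[OF assms(1,2) cr]
    by auto
qed

lemma center_subset_char_center:
  assumes G: "group G" and fin: "finite (carrier G)" and "\<chi> \<in> Irr G"
  shows "group_center G \<subseteq> char_center G \<chi>"
proof -
  obtain n \<rho> where irr: "irr_crep G n \<rho>" and \<chi>: "\<chi> = character G \<rho>"
    using assms(3) by (rule IrrE)
  have cr: "crep G n \<rho>"
    using irr by (rule irr_crep_crep)
  have "\<exists>c. \<rho> z = c \<cdot>\<^sub>m 1\<^sub>m n" if z: "z \<in> group_center G" for z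
  proof (rule schur_lemma[OF irr])
    have zG: "z \<in> carrier G"
      using z by (simp add: group_center_def)
    then show "\<rho> z \<in> carrier_mat n n"
      by (rule crep_carrier[OF cr])
    fix g assume g: "g \<in> carrier G"
    have "\<rho> z * \<rho> g = \<rho> (z \<otimes>\<^bsub>G\<^esub> g)"
      by (rule crep_mult[OF cr zG g, symmetric])
    also have "z \<otimes>\<^bsub>G\<^esub> g = g \<otimes>\<^bsub>G\<^esub> z"
      using z g by (simp add: group_center_def)
    also have "\<rho> (g \<otimes>\<^bsub>G\<^esub> z) = \<rho> g * \<rho> z"
      by (rule crep_mult[OF cr g zG])
    finally show "\<rho> z * \<rho> g = \<rho> g * \<rho> z" .
  qed
  then show ?thesis
    unfolding \<chi> char_center_character[OF G fin cr] by (auto simp: group_center_def)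
qed

lemma char_center_commutator_in_char_ker:
  assumes G: "group G" and fin: "finite (carrier G)" and "\<chi> \<in> Irr G"
    and gZ: "g \<in> char_center G \<chi>" and h: "h \<in> carrier G"
  shows "g \<otimes>\<^bsub>G\<^esub> h \<otimes>\<^bsub>G\<^esub> inv\<^bsub>G\<^esub> (h \<otimes>\<^bsub>G\<^esub> g) \<in> char_ker G \<chi>"
proof -
  obtain n \<rho> where "irr_crep G n \<rho>" and \<chi>: "\<chi> = character G \<rho>"
    using assms(3) by (rule IrrE)
  then have cr: "crep G n \<rho>"
    by (simp add: irr_crep_crep)
  obtain c where g: "g \<in> carrier G" and c: "\<rho> g = c \<cdot>\<^sub>m 1\<^sub>m n"
    using gZ unfolding \<chi> char_center_character[OF G fin cr] by blast
  have gh: "g \<otimes>\<^bsub>G\<^esub> h \<in> carrier G" and hg: "h \<otimes>\<^bsub>G\<^esub> g \<in> carrier G"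
    using g h by (simp_all add: G group.is_monoid monoid.m_closed)
  have "\<rho> (g \<otimes>\<^bsub>G\<^esub> h) = \<rho> (h \<otimes>\<^bsub>G\<^esub> g)"
    using crep_mult[OF cr g h] crep_mult[OF cr h g] smult_one_mat_comm[OF crep_carrier[OF cr h]]
    by (simp add: c)
  then have "\<rho> (g \<otimes>\<^bsub>G\<^esub> h \<otimes>\<^bsub>G\<^esub> inv\<^bsub>G\<^esub> (h \<otimes>\<^bsub>G\<^esub> g)) = 1\<^sub>m n"
    using crep_mult[OF cr gh group.inv_closed[OF G hg]] crep_inv[OF G cr hg] by simp
  then show ?thesis
    unfolding \<chi> char_ker_character[OF G fin cr]
    using gh hg by (simp add: G group.is_monoid monoid.m_closed group.inv_closed)
qed

section \<open>Characters of quotient groups\<close>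

lemma normal_rcos_one: "N \<lhd> G \<Longrightarrow> N #>\<^bsub>G\<^esub> \<one>\<^bsub>G\<^esub> = N"
  by (simp add: normal_def subgroup.subset group.coset_mult_one)

lemma rcos_mem_FactGroup: "g \<in> carrier G \<Longrightarrow> N #>\<^bsub>G\<^esub> g \<in> carrier (G Mod N)"
  by (auto simp: carrier_FactGroup)

lemma FactGroup_mult_rcos:
  "N \<lhd> G \<Longrightarrow> g \<in> carrier G \<Longrightarrow> h \<in> carrier G \<Longrightarrow>
    (N #>\<^bsub>G\<^esub> g) \<otimes>\<^bsub>G Mod N\<^esub> (N #>\<^bsub>G\<^esub> h) = N #>\<^bsub>G\<^esub> (g \<otimes>\<^bsub>G\<^esub> h)"
  using normal.rcos_sum by simp

lemma irr_crep_FactGroup_iff: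
  assumes N: "N \<lhd> G" and \<sigma>: "\<And>g. g \<in> carrier G \<Longrightarrow> \<sigma> (N #>\<^bsub>G\<^esub> g) = \<rho> g"
  shows "irr_crep (G Mod N) n \<sigma> \<longleftrightarrow> irr_crep G n \<rho>"
proof -
  have G: "group G"
    using N by (simp add: normal_def)
  have carrier: "carrier (G Mod N) = (\<lambda>g. N #>\<^bsub>G\<^esub> g) ` carrier G"
    by (rule carrier_FactGroup)
  have one: "\<sigma> \<one>\<^bsub>G Mod N\<^esub> = \<rho> \<one>\<^bsub>G\<^esub>"
    using \<sigma>[of "\<one>\<^bsub>G\<^esub>"] normal_rcos_one[OF N] by (simp add: G group.is_monoid monoid.one_closed)
  have mult: "\<sigma> ((N #>\<^bsub>G\<^esub> g) \<otimes>\<^bsub>G Mod N\<^esub> (N #>\<^bsub>G\<^esub> h)) = \<rho> (g \<otimes>\<^bsub>G\<^esub> h)"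
    if "g \<in> carrier G" "h \<in> carrier G" for g h
    using that \<sigma> FactGroup_mult_rcos[OF N] by (simp add: G group.is_monoid monoid.m_closed)
  have "crep (G Mod N) n \<sigma> \<longleftrightarrow> crep G n \<rho>"
    unfolding crep_def carrier using \<sigma> one mult by auto
  moreover have "(\<forall>C\<in>carrier (G Mod N). \<forall>w\<in>W. \<sigma> C *\<^sub>v w \<in> W) \<longleftrightarrow>
      (\<forall>g\<in>carrier G. \<forall>w\<in>W. \<rho> g *\<^sub>v w \<in> W)" for W
    unfolding carrier using \<sigma> by auto
  ultimately show ?thesis
    unfolding irr_crep_def by simp
qed

definition inflate_char :: "('a, 'b) monoid_scheme \<Rightarrow> 'a set \<Rightarrow> ('a set \<Rightarrow> complex) \<Rightarrow> 'a \<Rightarrow> complex"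
  where "inflate_char G N \<chi> = (\<lambda>g\<in>carrier G. \<chi> (N #>\<^bsub>G\<^esub> g))"

lemma Irr_inflate_char:
  assumes N: "N \<lhd> G" and "\<chi> \<in> Irr (G Mod N)"
  shows "inflate_char G N \<chi> \<in> Irr G"
proof -
  obtain n \<sigma> where irr: "irr_crep (G Mod N) n \<sigma>" and \<chi>: "\<chi> = character (G Mod N) \<sigma>"
    using assms(2) by (rule IrrE)
  have "irr_crep G n (\<lambda>g. \<sigma> (N #>\<^bsub>G\<^esub> g))"
    using irr irr_crep_FactGroup_iff[OF N, where \<sigma> = \<sigma> and \<rho> = "\<lambda>g. \<sigma> (N #>\<^bsub>G\<^esub> g)"]
    by simp
  moreover have "inflate_char G N \<chi> = character G (\<lambda>g. \<sigma> (N #>\<^bsub>G\<^esub> g))"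
    unfolding inflate_char_def \<chi> by (intro restrict_ext) (simp add: rcos_mem_FactGroup)
  ultimately show ?thesis
    by (simp add: IrrI)
qed

lemma Irr_eq_inflate_char:
  assumes N: "N \<lhd> G" and fin: "finite (carrier G)" and "\<chi> \<in> Irr G" and ker: "N \<subseteq> char_ker G \<chi>"
  obtains \<chi>' where "\<chi>' \<in> Irr (G Mod N)" and "\<chi> = inflate_char G N \<chi>'"
proof -
  have G: "group G"
    using N by (simp add: normal_def)
  have sub: "subgroup N G"
    using N by (simp add: normal_def)
  obtain n \<rho> where irr: "irr_crep G n \<rho>" and \<chi>: "\<chi> = character G \<rho>"
    using assms(3) by (rule IrrE)
  have cr: "crep G n \<rho>"
    using irr by (rule irr_crep_crep)
  have trivial_on_N: "\<rho> h = 1\<^sub>m n" if "h \<in> N" for h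
    using ker that unfolding \<chi> char_ker_character[OF G fin cr] by blast
  \<comment> \<open>\<open>\<rho>\<close> is constant on cosets of \<open>N\<close>, so any representative of a coset will do.\<close>
  define \<sigma> where "\<sigma> C = \<rho> (SOME b. b \<in> C)" for C
  have "\<sigma> (N #>\<^bsub>G\<^esub> g) = \<rho> g" if g: "g \<in> carrier G" for g
  proof -
    have "(SOME b. b \<in> N #>\<^bsub>G\<^esub> g) \<in> N #>\<^bsub>G\<^esub> g"
      using group.rcos_self[OF G g sub] by (rule someI)
    then obtain h where h: "h \<in> N" and "(SOME b. b \<in> N #>\<^bsub>G\<^esub> g) = h \<otimes>\<^bsub>G\<^esub> g"
      unfolding r_coset_def by blast
    then show ?thesis
      unfolding \<sigma>_def using crep_mult[OF cr _ g] subgroup.mem_carrier[OF sub h]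
        trivial_on_N[OF h] crep_carrier[OF cr g] by simp
  qed
  then have "irr_crep (G Mod N) n \<sigma>" and "\<chi> = inflate_char G N (character (G Mod N) \<sigma>)"
    using irr irr_crep_FactGroup_iff[OF N] unfolding \<chi> inflate_char_def
    by (auto simp: carrier_FactGroup)
  then show ?thesis
    using IrrI that by blast
qed

lemma inflate_char_one: "N \<lhd> G \<Longrightarrow> inflate_char G N \<chi> \<one>\<^bsub>G\<^esub> = \<chi> \<one>\<^bsub>G Mod N\<^esub>"
  by (simp add: inflate_char_def normal_rcos_one normal_def group.is_monoid monoid.one_closed)

lemma char_center_inflate_char:
  assumes "N \<lhd> G" and "g \<in> carrier G"
  shows "g \<in> char_center G (inflate_char G N \<chi>) \<longleftrightarrow> N #>\<^bsub>G\<^esub> g \<in> char_center (G Mod N) \<chi>"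
  using assms(2) rcos_mem_FactGroup[OF assms(2)]
  unfolding char_center_def inflate_char_one[OF assms(1)] by (simp add: inflate_char_def)

lemma char_ker_inflate_char:
  assumes "N \<lhd> G" and "g \<in> carrier G"
  shows "g \<in> char_ker G (inflate_char G N \<chi>) \<longleftrightarrow> N #>\<^bsub>G\<^esub> g \<in> char_ker (G Mod N) \<chi>"
  using assms(2) rcos_mem_FactGroup[OF assms(2)]
  unfolding char_ker_def inflate_char_one[OF assms(1)] by (simp add: inflate_char_def)

lemma char_center_inflate_char_subset_iff:
  assumes N: "N \<lhd> G"
  shows "char_center G (inflate_char G N \<chi>) \<subseteq> char_center G (inflate_char G N \<psi>) \<longleftrightarrow>
    char_center (G Mod N) \<chi> \<subseteq> char_center (G Mod N) \<psi>"
proof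
  assume sub: "char_center G (inflate_char G N \<chi>) \<subseteq> char_center G (inflate_char G N \<psi>)"
  show "char_center (G Mod N) \<chi> \<subseteq> char_center (G Mod N) \<psi>"
  proof
    fix C assume C: "C \<in> char_center (G Mod N) \<chi>"
    then obtain g where g: "g \<in> carrier G" and "C = N #>\<^bsub>G\<^esub> g"
      by (auto simp: char_center_def carrier_FactGroup)
    then show "C \<in> char_center (G Mod N) \<psi>"
      using C sub char_center_inflate_char[OF N g] by blast
  qed
next
  assume sub: "char_center (G Mod N) \<chi> \<subseteq> char_center (G Mod N) \<psi>"
  show "char_center G (inflate_char G N \<chi>) \<subseteq> char_center G (inflate_char G N \<psi>)"
  proof
    fix g assume g: "g \<in> char_center G (inflate_char G N \<chi>)"
    then have "g \<in> carrier G"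
      by (simp add: char_center_def)
    then show "g \<in> char_center G (inflate_char G N \<psi>)"
      using g sub char_center_inflate_char[OF N] by blast
  qed
qed

lemma char_ker_FactGroup_Int_trivial:
  assumes N: "N \<lhd> G"
    and ker: "char_ker G (inflate_char G N \<chi>) \<inter> char_ker G (inflate_char G N \<psi>) \<subseteq> N"
  shows "char_ker (G Mod N) \<chi> \<inter> char_ker (G Mod N) \<psi> = {\<one>\<^bsub>G Mod N\<^esub>}"
proof (intro equalityI subsetI)
  fix C assume C: "C \<in> char_ker (G Mod N) \<chi> \<inter> char_ker (G Mod N) \<psi>"
  then obtain g where g: "g \<in> carrier G" and C_eq: "C = N #>\<^bsub>G\<^esub> g"
    by (auto simp: char_ker_def carrier_FactGroup)
  then have "g \<in> N"
    using C char_ker_inflate_char[OF N g] ker by blast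
  then show "C \<in> {\<one>\<^bsub>G Mod N\<^esub>}"
    using C_eq subgroup.rcos_const[OF normal_imp_subgroup[OF N]] N by (simp add: normal_def)
next
  fix C assume "C \<in> {\<one>\<^bsub>G Mod N\<^esub>}"
  then show "C \<in> char_ker (G Mod N) \<chi> \<inter> char_ker (G Mod N) \<psi>"
    using monoid.one_closed[OF group.is_monoid[OF normal.factorgroup_is_group[OF N]]]
    by (simp add: char_ker_def)
qed

lemma finite_FactGroup: "finite (carrier G) \<Longrightarrow> finite (carrier (G Mod N))"
  by (simp add: carrier_FactGroup)

lemma FactGroup_nontrivial:
  assumes N: "N \<lhd> G" and proper: "N \<noteq> carrier G"
  shows "carrier (G Mod N) \<noteq> {\<one>\<^bsub>G Mod N\<^esub>}"
proof
  assume trivial: "carrier (G Mod N) = {\<one>\<^bsub>G Mod N\<^esub>}"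
  have G: "group G" and sub: "subgroup N G"
    using N by (simp_all add: normal_def)
  obtain a where a: "a \<in> carrier G" and aN: "a \<notin> N"
    using proper subgroup.subset[OF sub] by blast
  have "N #>\<^bsub>G\<^esub> a = N"
    using trivial rcos_mem_FactGroup[OF a, of N] by simp
  with group.rcos_self[OF G a sub] aN show False
    by simp
qed

section \<open>Nested groups\<close>

lemma nested_FactGroup:
  assumes "N \<lhd> G" and "nested G"
  shows "nested (G Mod N)"
  unfolding nested_def
proof (intro ballI)
  fix \<chi> \<psi> assume "\<chi> \<in> Irr (G Mod N)" and "\<psi> \<in> Irr (G Mod N)"
  then have "inflate_char G N \<chi> \<in> Irr G" and "inflate_char G N \<psi> \<in> Irr G"
    using Irr_inflate_char[OF assms(1)] by blast+
  then show "char_center (G Mod N) \<chi> \<subseteq> char_center (G Mod N) \<psi> \<or>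
      char_center (G Mod N) \<psi> \<subseteq> char_center (G Mod N) \<chi>"
    using assms(2) unfolding nested_def char_center_inflate_char_subset_iff[OF assms(1), symmetric]
    by blast
qed

lemma Kgrp_eq:
  "Kgrp H = {c \<in> carrier H. \<forall>\<chi>\<in>Irr H. group_center H \<subset> char_center H \<chi> \<longrightarrow> c \<in> char_ker H \<chi>}"
proof (cases "\<forall>x\<in>carrier H. \<forall>y\<in>carrier H. x \<otimes>\<^bsub>H\<^esub> y = y \<otimes>\<^bsub>H\<^esub> x")
  case True
  \<comment> \<open>For abelian \<open>H\<close> the set \<open>X\<^sub>H\<close> is empty, so the formula also yields \<open>K(H) = H\<close>.\<close>
  then have "group_center H = carrier H"
    by (auto simp: group_center_def)
  moreover have "char_center H \<chi> \<subseteq> carrier H" for \<chi>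
    by (auto simp: char_center_def)
  ultimately show ?thesis
    using True by (auto simp: Kgrp_def)
next
  case False
  then show ?thesis
    by (auto simp: Kgrp_def)
qed

lemma one_mem_Kgrp: "group H \<Longrightarrow> \<one>\<^bsub>H\<^esub> \<in> Kgrp H"
  by (simp add: Kgrp_eq char_ker_def group.is_monoid monoid.one_closed)

lemma nested_least_char_center:
  assumes fin: "finite (carrier H)" and nested: "nested H" and ex: "\<exists>\<chi>\<in>Irr H. P \<chi>"
  obtains \<psi> where "\<psi> \<in> Irr H" and "P \<psi>"
    and "\<And>\<chi>. \<chi> \<in> Irr H \<Longrightarrow> P \<chi> \<Longrightarrow> char_center H \<psi> \<subseteq> char_center H \<chi>"
proof -
  let ?Zs = "char_center H ` {\<chi> \<in> Irr H. P \<chi>}"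
  have "?Zs \<subseteq> Pow (carrier H)"
    by (auto simp: char_center_def)
  then have "finite ?Zs"
    using fin by (meson finite_Pow_iff finite_subset)
  moreover have "?Zs \<noteq> {}"
    using ex by blast
  ultimately obtain \<psi> where \<psi>: "\<psi> \<in> Irr H" "P \<psi>"
    and minimal: "\<not> (\<exists>Y\<in>?Zs. Y \<subset> char_center H \<psi>)"
    using ex_min_if_finite[of ?Zs] by blast
  show thesis
  proof (rule that[OF \<psi>])
    fix \<chi> assume \<chi>: "\<chi> \<in> Irr H" "P \<chi>"
    then have "char_center H \<psi> \<subseteq> char_center H \<chi> \<or> char_center H \<chi> \<subseteq> char_center H \<psi>"
      using nested \<psi>(1) unfolding nested_def by blast
    then show "char_center H \<psi> \<subseteq> char_center H \<chi>"
      using minimal \<chi> by blast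
  qed
qed

lemma Kgrp_nontrivial_if_nested:
  assumes H: "group H" and fin: "finite (carrier H)" and nested: "nested H"
    and nontrivial: "carrier H \<noteq> {\<one>\<^bsub>H\<^esub>}"
  shows "Kgrp H \<noteq> {\<one>\<^bsub>H\<^esub>}"
proof (cases "\<exists>\<chi>\<in>Irr H. group_center H \<subset> char_center H \<chi>")
  case False
  then have "Kgrp H = carrier H"
    by (auto simp: Kgrp_eq)
  with nontrivial show ?thesis
    by simp
next
  case True
  obtain \<psi> where \<psi>: "\<psi> \<in> Irr H" "group_center H \<subset> char_center H \<psi>"
    and least: "\<And>\<chi>. \<chi> \<in> Irr H \<Longrightarrow> group_center H \<subset> char_center H \<chi> \<Longrightarrow>
      char_center H \<psi> \<subseteq> char_center H \<chi>"
    using nested_least_char_center[OF fin nested True] by blast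
  from \<psi>(2) obtain g where gZ: "g \<in> char_center H \<psi>" and "g \<notin> group_center H"
    by blast
  moreover have g: "g \<in> carrier H"
    using gZ by (simp add: char_center_def)
  ultimately obtain h where h: "h \<in> carrier H" and noncomm: "g \<otimes>\<^bsub>H\<^esub> h \<noteq> h \<otimes>\<^bsub>H\<^esub> g"
    by (auto simp: group_center_def)
  define c where "c = g \<otimes>\<^bsub>H\<^esub> h \<otimes>\<^bsub>H\<^esub> inv\<^bsub>H\<^esub> (h \<otimes>\<^bsub>H\<^esub> g)"
  have gh: "g \<otimes>\<^bsub>H\<^esub> h \<in> carrier H" and hg: "h \<otimes>\<^bsub>H\<^esub> g \<in> carrier H"
    using g h by (simp_all add: H group.is_monoid monoid.m_closed)
  have "c \<in> Kgrp H"
    using char_center_commutator_in_char_ker[OF H fin _ _ h] least gZ gh hg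
    unfolding Kgrp_eq c_def by (auto simp: H group.is_monoid monoid.m_closed group.inv_closed)
  moreover have "c \<noteq> \<one>\<^bsub>H\<^esub>"
  proof
    assume "c = \<one>\<^bsub>H\<^esub>"
    then have "inv\<^bsub>H\<^esub> (inv\<^bsub>H\<^esub> (h \<otimes>\<^bsub>H\<^esub> g)) = g \<otimes>\<^bsub>H\<^esub> h"
      unfolding c_def by (rule group.inv_equality[OF H _ group.inv_closed[OF H hg] gh])
    with noncomm show False
      using group.inv_inv[OF H hg] by simp
  qed
  ultimately show ?thesis
    by blast
qed

lemma char_centers_comparable_if_Kgrp_nontrivial:
  assumes H: "group H" and fin: "finite (carrier H)" and \<chi>: "\<chi> \<in> Irr H" and \<psi>: "\<psi> \<in> Irr H"
    and kers: "char_ker H \<chi> \<inter> char_ker H \<psi> = {\<one>\<^bsub>H\<^esub>}" and K: "Kgrp H \<noteq> {\<one>\<^bsub>H\<^esub>}"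
  shows "char_center H \<chi> \<subseteq> char_center H \<psi> \<or> char_center H \<psi> \<subseteq> char_center H \<chi>"
proof -
  have "\<not> (group_center H \<subset> char_center H \<chi> \<and> group_center H \<subset> char_center H \<psi>)"
  proof
    assume "group_center H \<subset> char_center H \<chi> \<and> group_center H \<subset> char_center H \<psi>"
    then have "Kgrp H \<subseteq> char_ker H \<chi> \<inter> char_ker H \<psi>"
      unfolding Kgrp_eq using \<chi> \<psi> by blast
    then have "Kgrp H \<subseteq> {\<one>\<^bsub>H\<^esub>}"
      using kers by simp
    with K one_mem_Kgrp[OF H] show False
      by blast
  qed
  then show ?thesis
    using center_subset_char_center[OF H fin \<chi>] center_subset_char_center[OF H fin \<psi>] by blast
qed

lemma nested_if_Kgrp_FactGroup_nontrivial:
  assumes G: "group G" and fin: "finite (carrier G)"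
    and K: "\<And>N. N \<lhd> G \<Longrightarrow> N \<noteq> carrier G \<Longrightarrow> Kgrp (G Mod N) \<noteq> {\<one>\<^bsub>G Mod N\<^esub>}"
  shows "nested G"
  unfolding nested_def
proof (intro ballI)
  fix \<chi> \<psi> assume \<chi>: "\<chi> \<in> Irr G" and \<psi>: "\<psi> \<in> Irr G"
  define N where "N = char_ker G \<chi> \<inter> char_ker G \<psi>"
  have N: "N \<lhd> G"
    unfolding N_def using char_ker_normal[OF G fin \<chi>] char_ker_normal[OF G fin \<psi>]
    by (rule group.normal_subgroup_intersect[OF G])
  show "char_center G \<chi> \<subseteq> char_center G \<psi> \<or> char_center G \<psi> \<subseteq> char_center G \<chi>"
  proof (cases "N = carrier G")
    case True
    then have "char_center G \<chi> = carrier G" and "char_center G \<psi> = carrier G"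
      using char_ker_subset_char_center[OF G fin \<chi>] char_ker_subset_char_center[OF G fin \<psi>]
      by (auto simp: N_def char_center_def)
    then show ?thesis
      by simp
  next
    case False
    have "N \<subseteq> char_ker G \<chi>"
      by (simp add: N_def)
    then obtain \<chi>' where \<chi>': "\<chi>' \<in> Irr (G Mod N)" and \<chi>_eq: "\<chi> = inflate_char G N \<chi>'"
      by (rule Irr_eq_inflate_char[OF N fin \<chi>])
    have "N \<subseteq> char_ker G \<psi>"
      by (simp add: N_def)
    then obtain \<psi>' where \<psi>': "\<psi>' \<in> Irr (G Mod N)" and \<psi>_eq: "\<psi> = inflate_char G N \<psi>'"
      by (rule Irr_eq_inflate_char[OF N fin \<psi>])
    have "char_ker G \<chi> \<inter> char_ker G \<psi> \<subseteq> N"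
      by (simp add: N_def)
    then have "char_ker (G Mod N) \<chi>' \<inter> char_ker (G Mod N) \<psi>' = {\<one>\<^bsub>G Mod N\<^esub>}"
      unfolding \<chi>_eq \<psi>_eq by (rule char_ker_FactGroup_Int_trivial[OF N])
    then have "char_center (G Mod N) \<chi>' \<subseteq> char_center (G Mod N) \<psi>' \<or>
        char_center (G Mod N) \<psi>' \<subseteq> char_center (G Mod N) \<chi>'"
      using char_centers_comparable_if_Kgrp_nontrivial[OF normal.factorgroup_is_group[OF N]
          finite_FactGroup[OF fin] \<chi>' \<psi>']
        K[OF N False] by blast
    then show ?thesis
      unfolding \<chi>_eq \<psi>_eq char_center_inflate_char_subset_iff[OF N] .
  qed
qed

theorem theoremD:
  fixes G :: "('a, 'b) monoid_scheme"
  assumes "group G" and "finite (carrier G)"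
  shows "nested G \<longleftrightarrow>
    (\<forall>N. N \<lhd> G \<and> N \<noteq> carrier G \<longrightarrow> Kgrp (G Mod N) \<noteq> {\<one>\<^bsub>G Mod N\<^esub>})"
proof
  assume "nested G"
  then show "\<forall>N. N \<lhd> G \<and> N \<noteq> carrier G \<longrightarrow> Kgrp (G Mod N) \<noteq> {\<one>\<^bsub>G Mod N\<^esub>}"
    using Kgrp_nontrivial_if_nested[OF normal.factorgroup_is_group finite_FactGroup[OF assms(2)]
        nested_FactGroup FactGroup_nontrivial]
    by blast
next
  assume "\<forall>N. N \<lhd> G \<and> N \<noteq> carrier G \<longrightarrow> Kgrp (G Mod N) \<noteq> {\<one>\<^bsub>G Mod N\<^esub>}"
  then show "nested G"
    using nested_if_Kgrp_FactGroup_nontrivial[OF assms] by blast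
qed

end
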